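(* Let $\langle A,\to\rangle$ be a conditional algebra. Then the Stone map $\varphi\colon A\to\mathcal{P}(\mathrm{Ul}(A))$, $\varphi(a)=\{u\in\mathrm{Ul}(A): a\in u\}$, is an embedding of $\langle A,\to\rangle$ into $\mathrm{Em}(A)=\langle \mathcal{P}(\mathrm{Ul}(A)),\to_{T_A}\rangle$. That is, $\varphi$ is an injective Boolean homomorphism and $\varphi(a\to b)=\varphi(a)\to_{T_A}\varphi(b)$ for all $a,b\in A$.
   Context: A conditional algebra is a pair $\langle A,\to\rangle$ where $A$ is a Boolean algebra and $\to$ is a binary operation on $A$ such that for all $a,b,c$: $a\to 1=1$; $(a\to b)\wedge(a\to c)=a\to(b\wedge c)$; $(a\vee b)\to c\le (a\to c)\wedge(b\to c)$. Filters of $A$ include the improper filter $A$; $\mathrm{Ul}(A)$ is the set of ultrafilters. For a filter $F$, $\varphi(F)=\{u\in\mathrm{Ul}(A):F\subseteq u\}$ (so $\varphi(A)=\emptyset$). For $X,Y\subseteq A$, $D^{\to}_X(Y)=\{b\in A:\exists a\in Y,\ a\to b\in X\}$. The relation $T_A\subseteq \mathrm{Ul}(A)\times\mathcal{P}(\mathrm{Ul}(A))\times\mathrm{Ul}(A)$ is defined by: $T_A(u,Z,v)$ iff there is a filter $F$ of $A$ with $Z=\varphi(F)$ and $D^{\to}_u(F)\subseteq v$. Write $T_A(u,Z)=\{v: T_A(u,Z,v)\}$. For $U,V\subseteq \mathrm{Ul}(A)$, $U\to_{T_A}V=\{u\in\mathrm{Ul}(A): \text{for all } Z\subseteq U,\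 T_A(u,Z)\subseteq V\}$. *)

theory Defs
  imports Main
begin

definition conditional_algebra :: "('a::boolean_algebra \<Rightarrow> 'a \<Rightarrow> 'a) \<Rightarrow> bool" where
  "conditional_algebra imp \<longleftrightarrow>
     (\<forall>a. imp a top = top) \<and>
     (\<forall>a b c. inf (imp a b) (imp a c) = imp a (inf b c)) \<and>
     (\<forall>a b c. imp (sup a b) c \<le> inf (imp a c) (imp b c))"

text \<open>Filters (the improper filter UNIV included).\<close>
definition ba_filter :: "'a::boolean_algebra set \<Rightarrow> bool" where
  "ba_filter F \<longleftrightarrow> top \<in> F \<and> (\<forall>a\<in>F. \<forall>b. a \<le> b \<longrightarrow> b \<in> F) \<and>
     (\<forall>a\<in>F. \<forall>b\<in>F. inf a b \<in> F)"

definition ultrafilters :: "'a::boolean_algebra set set" where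
  "ultrafilters = {u. ba_filter u \<and> u \<noteq> UNIV \<and>
     (\<forall>G. ba_filter G \<and> G \<noteq> UNIV \<and> u \<subseteq> G \<longrightarrow> G = u)}"

definition phiF :: "'a::boolean_algebra set \<Rightarrow> 'a set set" where
  "phiF F = {u \<in> ultrafilters. F \<subseteq> u}"

definition stone :: "'a::boolean_algebra \<Rightarrow> 'a set set" where
  "stone a = {u \<in> ultrafilters. a \<in> u}"

definition Dimp :: "('a \<Rightarrow> 'a \<Rightarrow> 'a) \<Rightarrow> 'a set \<Rightarrow> 'a set \<Rightarrow> 'a set" where
  "Dimp imp X Y = {b. \<exists>a\<in>Y. imp a b \<in> X}"

definition T_rel :: "('a::boolean_algebra \<Rightarrow> 'a \<Rightarrow> 'a) \<Rightarrow> 'a set \<Rightarrow> 'a set set \<Rightarrow> 'a set \<Rightarrow> bool" where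
  "T_rel imp u Z v \<longleftrightarrow> u \<in> ultrafilters \<and> v \<in> ultrafilters \<and>
     (\<exists>F. ba_filter F \<and> Z = phiF F \<and> Dimp imp u F \<subseteq> v)"

definition T_img :: "('a::boolean_algebra \<Rightarrow> 'a \<Rightarrow> 'a) \<Rightarrow> 'a set \<Rightarrow> 'a set set \<Rightarrow> 'a set set" where
  "T_img imp u Z = {v. T_rel imp u Z v}"

definition imp_T :: "('a::boolean_algebra \<Rightarrow> 'a \<Rightarrow> 'a) \<Rightarrow> 'a set set \<Rightarrow> 'a set set \<Rightarrow> 'a set set" where
  "imp_T imp U V = {u \<in> ultrafilters. \<forall>Z. Z \<subseteq> U \<longrightarrow> T_img imp u Z \<subseteq> V}"

end

theory Submission
  imports Defs
begin

text \<open>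
  The Boolean part is Stone's representation theorem, resting on the ultrafilter theorem:
  a filter avoiding b extends to an ultrafilter avoiding b.
  For the conditional, the axioms make \<open>D\<^sub>u(a) = {c. a \<rightarrow> c \<in> u}\<close> a filter, and the
  principal filter of a shows \<open>T(u, \<phi>(a)) = \<phi>(D\<^sub>u(a))\<close>. Conversely every \<open>Z = \<phi>(F) \<subseteq> \<phi>(a)\<close>
  has \<open>a \<in> F\<close>, hence \<open>T(u, Z) \<subseteq> \<phi>(D\<^sub>u(a))\<close>. So \<open>u \<in> \<phi>(a) \<rightarrow>\<^sub>T \<phi>(b)\<close> iff every
  ultrafilter containing \<open>D\<^sub>u(a)\<close> contains b, iff \<open>b \<in> D\<^sub>u(a)\<close>, iff \<open>a \<rightarrow> b \<in> u\<close>.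
\<close>

lemma ba_filter_top: "ba_filter F \<Longrightarrow> top \<in> F"
  unfolding ba_filter_def by blast

lemma ba_filter_up: "ba_filter F \<Longrightarrow> a \<in> F \<Longrightarrow> a \<le> b \<Longrightarrow> b \<in> F"
  unfolding ba_filter_def by blast

lemma ba_filter_inf: "ba_filter F \<Longrightarrow> a \<in> F \<Longrightarrow> b \<in> F \<Longrightarrow> inf a b \<in> F"
  unfolding ba_filter_def by blast

lemma ba_filter_inf_iff: "ba_filter F \<Longrightarrow> inf a b \<in> F \<longleftrightarrow> a \<in> F \<and> b \<in> F"
  by (meson ba_filter_inf ba_filter_up inf.cobounded1 inf.cobounded2)

lemma ba_filter_principal: "ba_filter {x. a \<le> x}"
  unfolding ba_filter_def by auto

lemma ba_filter_proper_iff: "ba_filter F \<Longrightarrow> F \<noteq> UNIV \<longleftrightarrow> bot \<notin> F"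
  by (auto intro: ba_filter_up)

lemma ba_filter_Union_chain:
  assumes "C \<noteq> {}" "subset.chain {G. ba_filter G} C"
  shows "ba_filter (\<Union>C)"
  unfolding ba_filter_def
proof (intro conjI ballI allI impI)
  have filters: "\<And>G. G \<in> C \<Longrightarrow> ba_filter G"
    and chain: "\<And>G H. G \<in> C \<Longrightarrow> H \<in> C \<Longrightarrow> G \<subseteq> H \<or> H \<subseteq> G"
    using assms(2) unfolding subset.chain_def by auto
  show "top \<in> \<Union>C" using assms(1) filters ba_filter_top by blast
  show "b \<in> \<Union>C" if "a \<in> \<Union>C" "a \<le> b" for a b
    using that filters ba_filter_up by blast
  show "inf a b \<in> \<Union>C" if a: "a \<in> \<Union>C" and b: "b \<in> \<Union>C" for a b
  proof -
    obtain G H where "G \<in> C" "H \<in> C" "a \<in> G" "b \<in> H" using a b by blast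
    then show ?thesis using chain[of G H] filters ba_filter_inf by blast
  qed
qed

text \<open>The filter generated by F and c; \<open>sup x (- c)\<close> is the Boolean implication \<open>c \<Rightarrow> x\<close>.\<close>
definition filter_adjoin :: "'a::boolean_algebra set \<Rightarrow> 'a \<Rightarrow> 'a set" where
  "filter_adjoin F c = {x. sup x (- c) \<in> F}"

lemma ba_filter_adjoin:
  assumes "ba_filter F"
  shows "ba_filter (filter_adjoin F c)"
  unfolding ba_filter_def filter_adjoin_def
proof (intro conjI ballI allI impI CollectI)
  show "sup top (- c) \<in> F" using ba_filter_top[OF assms] by simp
  show "sup b (- c) \<in> F" if "a \<in> {x. sup x (- c) \<in> F}" "a \<le> b" for a b
    using that ba_filter_up[OF assms] sup_mono by blast
  show "sup (inf a b) (- c) \<in> F" if "a \<in> {x. sup x (- c) \<in> F}" "b \<in> {x. sup x (- c) \<in> F}" for a b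
    using that ba_filter_inf[OF assms] by (simp add: sup_inf_distrib2)
qed

lemma filter_adjoin_superset: "ba_filter F \<Longrightarrow> F \<subseteq> filter_adjoin F c"
  unfolding filter_adjoin_def by (auto intro: ba_filter_up)

lemma filter_adjoin_mem: "ba_filter F \<Longrightarrow> c \<in> filter_adjoin F c"
  unfolding filter_adjoin_def by (simp add: ba_filter_top)

lemma ultrafilter_ba_filter: "u \<in> ultrafilters \<Longrightarrow> ba_filter u"
  unfolding ultrafilters_def by blast

lemma ultrafilter_bot: "u \<in> ultrafilters \<Longrightarrow> bot \<notin> u"
  unfolding ultrafilters_def using ba_filter_proper_iff by blast

lemma ultrafilter_compl_iff:
  assumes u: "u \<in> ultrafilters"
  shows "- c \<in> u \<longleftrightarrow> c \<notin> u"
proof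
  show "c \<notin> u" if "- c \<in> u"
    using that ba_filter_inf[OF ultrafilter_ba_filter[OF u], of c "- c"] ultrafilter_bot[OF u] by auto
next
  assume "c \<notin> u"
  then have "filter_adjoin u c \<noteq> u" using filter_adjoin_mem ultrafilter_ba_filter[OF u] by blast
  then have "filter_adjoin u c = UNIV"
    using u ba_filter_adjoin filter_adjoin_superset unfolding ultrafilters_def by blast
  then have "sup bot (- c) \<in> u" unfolding filter_adjoin_def by blast
  then show "- c \<in> u" by simp
qed

lemma ultrafilterI:
  assumes "ba_filter u" "bot \<notin> u" "\<And>c. c \<in> u \<or> - c \<in> u"
  shows "u \<in> ultrafilters"
  unfolding ultrafilters_def
proof (intro CollectI conjI allI impI)
  show "u \<noteq> UNIV" using assms(2) by blast
  fix G assume G: "ba_filter G \<and> G \<noteq> UNIV \<and> u \<subseteq> G"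
  have "c \<in> u" if "c \<in> G" for c
  proof (rule ccontr)
    assume "c \<notin> u"
    then have "inf c (- c) \<in> G" using that G assms(3) ba_filter_inf by blast
    then show False using G ba_filter_proper_iff by auto
  qed
  then show "G = u" using G by blast
qed fact

lemma ultrafilter_sup_iff:
  assumes "u \<in> ultrafilters"
  shows "sup a b \<in> u \<longleftrightarrow> a \<in> u \<or> b \<in> u"
proof -
  have "sup a b \<in> u \<longleftrightarrow> inf (- a) (- b) \<notin> u"
    using ultrafilter_compl_iff[OF assms, of "sup a b"] by simp
  also have "\<dots> \<longleftrightarrow> a \<in> u \<or> b \<in> u"
    using ba_filter_inf_iff[OF ultrafilter_ba_filter[OF assms]] ultrafilter_compl_iff[OF assms] by blast
  finally show ?thesis .
qed

theorem ultrafilter_separation: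
  assumes F: "ba_filter F" and "b \<notin> F"
  obtains u where "u \<in> ultrafilters" "F \<subseteq> u" "b \<notin> u"
proof -
  define A where "A = {G. ba_filter G \<and> F \<subseteq> G \<and> b \<notin> G}"
  have "\<Union>C \<in> A" if C: "C \<noteq> {}" "subset.chain A C" for C
  proof -
    have "C \<subseteq> A" using C(2) unfolding subset.chain_def by blast
    moreover have "subset.chain {G. ba_filter G} C"
      using C(2) unfolding A_def subset.chain_def by blast
    ultimately show ?thesis using C(1) ba_filter_Union_chain unfolding A_def by blast
  qed
  moreover have "F \<in> A" using assms unfolding A_def by blast
  ultimately obtain M where "M \<in> A" and maximal: "\<And>G. G \<in> A \<Longrightarrow> M \<subseteq> G \<Longrightarrow> G = M"
    using subset_Zorn_nonempty[of A] by blast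
  then have M: "ba_filter M" "F \<subseteq> M" "b \<notin> M" unfolding A_def by auto
  have adjoin_hits_b: "sup b (- d) \<in> M" if "d \<notin> M" for d
  proof -
    have "filter_adjoin M d \<noteq> M" using that filter_adjoin_mem[OF M(1)] by blast
    then have "filter_adjoin M d \<notin> A" using maximal filter_adjoin_superset[OF M(1)] by blast
    then have "b \<in> filter_adjoin M d"
      using M ba_filter_adjoin filter_adjoin_superset unfolding A_def by blast
    then show ?thesis unfolding filter_adjoin_def by blast
  qed
  have "c \<in> M \<or> - c \<in> M" for c
  proof (rule ccontr)
    assume "\<not> (c \<in> M \<or> - c \<in> M)"
    then have "inf (sup b c) (sup b (- c)) \<in> M"
      using adjoin_hits_b[of c] adjoin_hits_b[of "- c"] ba_filter_inf[OF M(1)] by simp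
    then show False using M(3) by (simp add: sup_inf_distrib1[symmetric])
  qed
  moreover have "bot \<notin> M" using M ba_filter_up bot.extremum by blast
  ultimately show ?thesis using that ultrafilterI M by blast
qed

lemma stone_inf: "stone (inf a b) = stone a \<inter> stone b"
  unfolding stone_def using ultrafilter_ba_filter ba_filter_inf_iff by blast

lemma stone_sup: "stone (sup a b) = stone a \<union> stone b"
  unfolding stone_def using ultrafilter_sup_iff by blast

lemma stone_compl: "stone (- a) = ultrafilters - stone a"
  unfolding stone_def using ultrafilter_compl_iff by blast

lemma stone_bot: "stone bot = {}"
  unfolding stone_def using ultrafilter_bot by blast

lemma stone_top: "stone top = ultrafilters"
  unfolding stone_def using ultrafilter_ba_filter ba_filter_top by blast

lemma phiF_subset_stone_iff:
  assumes "ba_filter F"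
  shows "phiF F \<subseteq> stone a \<longleftrightarrow> a \<in> F"
proof
  assume "phiF F \<subseteq> stone a"
  then show "a \<in> F" using ultrafilter_separation[OF assms, of a] unfolding phiF_def stone_def by blast
qed (auto simp: phiF_def stone_def)

lemma phiF_principal: "phiF {x. a \<le> x} = stone a"
  unfolding phiF_def stone_def using ultrafilter_ba_filter ba_filter_up by blast

lemma stone_subset_iff: "stone a \<subseteq> stone b \<longleftrightarrow> a \<le> b"
  using phiF_subset_stone_iff[OF ba_filter_principal] by (simp add: phiF_principal[symmetric])

lemma inj_stone: "inj stone"
  by (rule injI) (metis stone_subset_iff order_antisym order_refl)

lemma conditional_algebra_mono_right:
  "conditional_algebra imp \<Longrightarrow> b \<le> c \<Longrightarrow> imp a b \<le> imp a c"
  unfolding conditional_algebra_def by (metis inf.absorb_iff1 inf.cobounded2)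

lemma conditional_algebra_antimono_left:
  "conditional_algebra imp \<Longrightarrow> a \<le> a' \<Longrightarrow> imp a' c \<le> imp a c"
  unfolding conditional_algebra_def by (metis le_inf_iff sup.absorb2)

lemma ba_filter_imp_section:
  assumes imp: "conditional_algebra imp" and u: "ba_filter u"
  shows "ba_filter {c. imp a c \<in> u}"
  unfolding ba_filter_def
proof (intro conjI ballI allI impI CollectI)
  show "imp a top \<in> u" using imp ba_filter_top[OF u] unfolding conditional_algebra_def by simp
  show "imp a c \<in> u" if "b \<in> {c. imp a c \<in> u}" "b \<le> c" for b c
    using that ba_filter_up[OF u] conditional_algebra_mono_right[OF imp] by blast
  show "imp a (inf b c) \<in> u" if "b \<in> {c. imp a c \<in> u}" "c \<in> {c. imp a c \<in> u}" for b c
    using that ba_filter_inf[OF u] imp unfolding conditional_algebra_def by fastforce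
qed

lemma Dimp_principal:
  assumes "conditional_algebra imp" "ba_filter u"
  shows "Dimp imp u {x. a \<le> x} = {c. imp a c \<in> u}"
  unfolding Dimp_def
  using ba_filter_up[OF assms(2)] conditional_algebra_antimono_left[OF assms(1)] by blast

lemma T_img_subset_of_stone:
  assumes "Z \<subseteq> stone a"
  shows "T_img imp u Z \<subseteq> phiF {c. imp a c \<in> u}"
proof
  fix v assume "v \<in> T_img imp u Z"
  then obtain F where F: "ba_filter F" "Z = phiF F" "Dimp imp u F \<subseteq> v" "v \<in> ultrafilters"
    unfolding T_img_def T_rel_def by blast
  then have "a \<in> F" using assms phiF_subset_stone_iff[OF F(1)] by simp
  then have "{c. imp a c \<in> u} \<subseteq> Dimp imp u F" unfolding Dimp_def by blast
  then show "v \<in> phiF {c. imp a c \<in> u}" using F(3,4) unfolding phiF_def by blast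
qed

lemma T_img_stone:
  assumes "conditional_algebra imp" "u \<in> ultrafilters"
  shows "T_img imp u (stone a) = phiF {c. imp a c \<in> u}"
proof
  show "phiF {c. imp a c \<in> u} \<subseteq> T_img imp u (stone a)"
  proof
    fix v assume "v \<in> phiF {c. imp a c \<in> u}"
    then have "v \<in> ultrafilters" "Dimp imp u {x. a \<le> x} \<subseteq> v"
      unfolding phiF_def Dimp_principal[OF assms(1) ultrafilter_ba_filter[OF assms(2)]] by auto
    then show "v \<in> T_img imp u (stone a)"
      unfolding T_img_def T_rel_def phiF_principal[symmetric]
      using assms(2) ba_filter_principal by blast
  qed
qed (rule T_img_subset_of_stone[OF order_refl])

lemma imp_T_stone:
  assumes "conditional_algebra imp"
  shows "imp_T imp (stone a) V = {u \<in> ultrafilters. phiF {c. imp a c \<in> u} \<subseteq> V}"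
proof -
  have "(\<forall>Z. Z \<subseteq> stone a \<longrightarrow> T_img imp u Z \<subseteq> V) \<longleftrightarrow> phiF {c. imp a c \<in> u} \<subseteq> V"
    if "u \<in> ultrafilters" for u
  proof
    assume "\<forall>Z. Z \<subseteq> stone a \<longrightarrow> T_img imp u Z \<subseteq> V"
    then show "phiF {c. imp a c \<in> u} \<subseteq> V" using T_img_stone[OF assms that] by auto
  next
    assume V: "phiF {c. imp a c \<in> u} \<subseteq> V"
    show "\<forall>Z. Z \<subseteq> stone a \<longrightarrow> T_img imp u Z \<subseteq> V"
      using T_img_subset_of_stone V by (blast intro: order_trans)
  qed
  then show ?thesis unfolding imp_T_def by auto
qed

lemma stone_imp:
  assumes "conditional_algebra imp"
  shows "stone (imp a b) = imp_T imp (stone a) (stone b)"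
  using phiF_subset_stone_iff[OF ba_filter_imp_section[OF assms ultrafilter_ba_filter]]
  unfolding imp_T_stone[OF assms] by (auto simp: stone_def)

theorem theorem2p10:
  fixes imp :: "'a::boolean_algebra \<Rightarrow> 'a \<Rightarrow> 'a"
  assumes "conditional_algebra imp"
  shows "inj stone \<and>
    (\<forall>a b::'a. stone (inf a b) = stone a \<inter> stone b) \<and>
    (\<forall>a b::'a. stone (sup a b) = stone a \<union> stone b) \<and>
    (\<forall>a::'a. stone (- a) = ultrafilters - stone a) \<and>
    stone (bot::'a) = {} \<and> stone (top::'a) = ultrafilters \<and>
    (\<forall>a b. stone (imp a b) = imp_T imp (stone a) (stone b))"
  using inj_stone stone_inf stone_sup stone_compl stone_bot stone_top stone_imp[OF assms]
  by blast

end
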